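(* Let $p\in\{2,3\}$, let $\mathbf{k}$ be a field of characteristic $p$, and let $K=\mathbf{k}[y_1,y_2,y_3]/(y_1^p,y_2^p,y_3^p)$. Let $\mathcal{L}=Lie_K(x_1,x_2,x_3\mid y_3x_3=y_2x_2+y_1x_1)$. Then $\mathcal{L}$ is not embeddable into its universal enveloping algebra $U_K(\mathcal{L})=K\langle x_1,x_2,x_3\mid y_3x_3=y_2x_2+y_1x_1\rangle$; i.e., the canonical map $\mathcal{L}\to U_K(\mathcal{L})$ is not injective.
   Context: $Lie_K(X\mid\cdot)$ denotes the free Lie $K$-algebra on $X$ modulo the ideal generated by the given relation; $U_K(\mathcal L)$ is the corresponding associative $K$-algebra with identity, and the canonical map is induced by $x_i\mapsto x_i$. *)

theory Defs
  imports Main "HOL-Library.Function_Algebras"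
begin

text \<open>
  K = k[y1,y2,y3]/(y1^p,y2^p,y3^p) and the free associative
  K-algebra K<x1,x2,x3> = K \<otimes>_k k<x1,x2,x3>.  A basis monomial is a pair
  ((a,b,c), w) standing for y1^a y2^b y3^c w, where w is a word in the
  letters 1,2,3 (letter i stands for x_i) and a,b,c < p.  An element is a
  finitely supported k-valued function on valid monomials.
\<close>

type_synonym mono = "(nat \<times> nat \<times> nat) \<times> nat list"
type_synonym 'k elt = "mono \<Rightarrow> 'k"

definition valid_mono :: "nat \<Rightarrow> mono \<Rightarrow> bool" where
  "valid_mono p m = (case m of ((a, b, c), w) \<Rightarrow>
      a < p \<and> b < p \<and> c < p \<and> set w \<subseteq> {1, 2, 3})"

definition supp :: "'k::zero elt \<Rightarrow> mono set" where
  "supp f = {m. f m \<noteq> 0}"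

definition FA :: "nat \<Rightarrow> ('k::zero) elt set" where
  "FA p = {f. finite (supp f) \<and> (\<forall>m. f m \<noteq> 0 \<longrightarrow> valid_mono p m)}"

text \<open>The coefficient ring K, embedded as the elements supported on the empty word.\<close>
definition Kpart :: "nat \<Rightarrow> ('k::zero) elt set" where
  "Kpart p = {f \<in> FA p. \<forall>e w. f (e, w) \<noteq> 0 \<longrightarrow> w = []}"

fun mono_mult :: "mono \<Rightarrow> mono \<Rightarrow> mono" where
  "mono_mult ((a1, b1, c1), w1) ((a2, b2, c2), w2) =
     ((a1 + a2, b1 + b2, c1 + c2), w1 @ w2)"

text \<open>Multiplication in K<x1,x2,x3> (monomials with some y-exponent \<ge> p vanish).\<close>
definition emult :: "nat \<Rightarrow> 'k::comm_ring_1 elt \<Rightarrow> 'k elt \<Rightarrow> 'k elt" where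
  "emult p f g = (\<lambda>m. if valid_mono p m then
      (\<Sum>(m1, m2) \<in> {(m1, m2). m1 \<in> supp f \<and> m2 \<in> supp g \<and> mono_mult m1 m2 = m}.
          f m1 * g m2)
    else 0)"

definition ecomm :: "nat \<Rightarrow> 'k::comm_ring_1 elt \<Rightarrow> 'k elt \<Rightarrow> 'k elt" where
  "ecomm p f g = emult p f g - emult p g f"

definition basis_el :: "mono \<Rightarrow> 'k::{zero,one} elt" where
  "basis_el m = (\<lambda>m'. if m' = m then 1 else 0)"

definition xg :: "nat \<Rightarrow> 'k::{zero,one} elt" where
  "xg i = basis_el ((0, 0, 0), [i])"

definition rel :: "'k::comm_ring_1 elt" where
  "rel = basis_el ((0, 0, 1), [3]) - basis_el ((0, 1, 0), [2]) - basis_el ((1, 0, 0), [1])"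

inductive_set FreeLie :: "nat \<Rightarrow> 'k::comm_ring_1 elt set" for p where
  gen: "i \<in> {1, 2, 3} \<Longrightarrow> xg i \<in> FreeLie p"
| zero: "0 \<in> FreeLie p"
| add: "f \<in> FreeLie p \<Longrightarrow> g \<in> FreeLie p \<Longrightarrow> f + g \<in> FreeLie p"
| smult: "c \<in> Kpart p \<Longrightarrow> f \<in> FreeLie p \<Longrightarrow> emult p c f \<in> FreeLie p"
| bracket: "f \<in> FreeLie p \<Longrightarrow> g \<in> FreeLie p \<Longrightarrow> ecomm p f g \<in> FreeLie p"

inductive_set LieIdeal :: "nat \<Rightarrow> 'k::comm_ring_1 elt set" for p where
  gen: "rel \<in> LieIdeal p"
| zero: "0 \<in> LieIdeal p"
| add: "f \<in> LieIdeal p \<Longrightarrow> g \<in> LieIdeal p \<Longrightarrow> f + g \<in> LieIdeal p"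
| smult: "c \<in> Kpart p \<Longrightarrow> f \<in> LieIdeal p \<Longrightarrow> emult p c f \<in> LieIdeal p"
| bracket: "f \<in> LieIdeal p \<Longrightarrow> g \<in> FreeLie p \<Longrightarrow> ecomm p f g \<in> LieIdeal p"

text \<open>The two-sided ideal of K<x1,x2,x3> generated by the relation;
  U_K(L) = K<x1,x2,x3> / AssocIdeal.\<close>
inductive_set AssocIdeal :: "nat \<Rightarrow> 'k::comm_ring_1 elt set" for p where
  gen: "rel \<in> AssocIdeal p"
| zero: "0 \<in> AssocIdeal p"
| add: "f \<in> AssocIdeal p \<Longrightarrow> g \<in> AssocIdeal p \<Longrightarrow> f + g \<in> AssocIdeal p"
| lmult: "a \<in> FA p \<Longrightarrow> f \<in> AssocIdeal p \<Longrightarrow> emult p a f \<in> AssocIdeal p"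
| rmult: "a \<in> FA p \<Longrightarrow> f \<in> AssocIdeal p \<Longrightarrow> emult p f a \<in> AssocIdeal p"

text \<open>The canonical map L = FreeLie/LieIdeal \<rightarrow> U_K(L) = FA/AssocIdeal is
  induced by the inclusion FreeLie \<subseteq> FA; it is injective iff every
  element of FreeLie lying in AssocIdeal lies in LieIdeal.\<close>
definition canonical_map_injective :: "nat \<Rightarrow> 'k::comm_ring_1 itself \<Rightarrow> bool" where
  "canonical_map_injective p _ =
     (\<forall>f \<in> (FreeLie p :: 'k elt set). f \<in> AssocIdeal p \<longrightarrow> f \<in> LieIdeal p)"

end

theory Submission
  imports Defs
begin

text \<open>In characteristic \<open>p\<close> the element \<open>a = y\<^sub>1x\<^sub>1 + y\<^sub>2x\<^sub>2\<close> is congruent to \<open>y\<^sub>3x\<^sub>3\<close> modulo the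
  relation, and \<open>(y\<^sub>3x\<^sub>3)\<^sup>p = 0\<close> because \<open>y\<^sub>3\<^sup>p = 0\<close>; so \<open>a\<^sup>p\<close> lies in the associative ideal of
  the relation, i.e. it vanishes in \<open>U\<^sub>K(L)\<close>. On the other hand \<open>a\<^sup>p\<close> is a Lie element, namely
  \<open>y\<^sub>1y\<^sub>2[x\<^sub>1,x\<^sub>2]\<close> for \<open>p = 2\<close> and \<open>y\<^sub>1\<^sup>2y\<^sub>2[x\<^sub>1,[x\<^sub>1,x\<^sub>2]] + y\<^sub>1y\<^sub>2\<^sup>2[x\<^sub>2,[x\<^sub>2,x\<^sub>1]]\<close> for \<open>p = 3\<close>.
  It is not in the Lie ideal of the relation: the components of word length 2 and 3 of that ideal
  lie in the \<open>k\<close>-spans of the \<open>K\<close>-multiples of \<open>[rel,x\<^sub>i]\<close>, resp. of \<open>[[rel,x\<^sub>i],x\<^sub>j]\<close> and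
  \<open>[rel,[x\<^sub>i,x\<^sub>j]]\<close>, and an explicit linear functional vanishes on these spans but not on \<open>a\<^sup>p\<close>.\<close>

definition monom :: "nat \<Rightarrow> mono \<Rightarrow> 'k::comm_ring_1 elt" where
  "monom p m = (if valid_mono p m then basis_el m else 0)"

definition escale :: "'k \<Rightarrow> 'k::comm_ring_1 elt \<Rightarrow> 'k elt" where
  "escale c f = (\<lambda>m. c * f m)"

lemma sum_fun_apply: "sum F A x = (\<Sum>a\<in>A. F a x :: 'b::comm_monoid_add)"
  by (induction A rule: infinite_finite_induct) auto

lemma escale_apply: "escale c f m = c * f m"
  by (simp add: escale_def)

lemma monom_apply: "monom p m m' = (if valid_mono p m \<and> m' = m then 1 else 0)"
  by (simp add: monom_def basis_el_def)

lemma monom_invalid: "\<not> valid_mono p m \<Longrightarrow> monom p m = 0"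
  by (simp add: monom_def)

lemma supp_add: "supp (f + g) \<subseteq> supp f \<union> supp (g::'k::comm_ring_1 elt)"
  by (auto simp: supp_def)

lemma supp_escale: "supp (escale c f) \<subseteq> supp (f::'k::comm_ring_1 elt)"
  by (auto simp: supp_def escale_def)

lemma escale_minus_one: "escale (-1) f = - (f::'k::comm_ring_1 elt)"
  by (rule ext) (simp add: escale_def)

lemma escale_diff: "escale c (f - g) = escale c f - escale c (g::'k::comm_ring_1 elt)"
  by (rule ext) (simp add: escale_def algebra_simps)

lemma FA_finite_supp: "f \<in> FA p \<Longrightarrow> finite (supp f)"
  by (simp add: FA_def)

lemma FA_valid_mono: "f \<in> FA p \<Longrightarrow> f m \<noteq> 0 \<Longrightarrow> valid_mono p m"
  unfolding FA_def by blast

lemma FAI: "finite (supp f) \<Longrightarrow> (\<And>m. f m \<noteq> 0 \<Longrightarrow> valid_mono p m) \<Longrightarrow> f \<in> FA p"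
  unfolding FA_def by blast

lemma FA_zero [simp]: "(0::'k::comm_ring_1 elt) \<in> FA p"
  by (rule FAI) (auto simp: supp_def)

lemma FA_add [simp]: "f \<in> FA p \<Longrightarrow> g \<in> FA p \<Longrightarrow> f + (g::'k::comm_ring_1 elt) \<in> FA p"
  by (rule FAI) (metis FA_finite_supp finite_Un finite_subset supp_add,
      metis FA_valid_mono add.right_neutral plus_fun_apply)

lemma FA_escale [simp]: "f \<in> FA p \<Longrightarrow> escale c (f::'k::comm_ring_1 elt) \<in> FA p"
  by (rule FAI) (metis FA_finite_supp finite_subset supp_escale,
      metis FA_valid_mono mult_zero_right escale_def)

lemma FA_uminus [simp]: "f \<in> FA p \<Longrightarrow> - (f::'k::comm_ring_1 elt) \<in> FA p"
  using FA_escale[of f p "-1"] by (simp add: escale_minus_one)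

lemma FA_diff [simp]: "f \<in> FA p \<Longrightarrow> g \<in> FA p \<Longrightarrow> f - (g::'k::comm_ring_1 elt) \<in> FA p"
  using FA_add[of f p "-g"] by simp

lemma FA_monom [simp]: "monom p m \<in> FA p"
  by (rule FAI) (auto intro: finite_subset[of _ "{m}"] simp: supp_def monom_apply split: if_splits)

lemma FA_eq_sum_monom:
  fixes f :: "'k::comm_ring_1 elt"
  assumes "f \<in> FA p"
  shows "f = (\<Sum>m\<in>supp f. escale (f m) (monom p m))"
proof
  fix m'
  have "(\<Sum>m\<in>supp f. escale (f m) (monom p m)) m' = (\<Sum>m\<in>supp f. if m = m' then f m else 0)"
    unfolding sum_fun_apply
    by (rule sum.cong) (auto simp: escale_def monom_apply supp_def dest: FA_valid_mono[OF assms])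
  also have "\<dots> = f m'"
    using FA_finite_supp[OF assms] by (simp add: supp_def)
  finally show "f m' = (\<Sum>m\<in>supp f. escale (f m) (monom p m)) m'" by simp
qed

lemma emult_eq_sum_over:
  fixes f g :: "'k::comm_ring_1 elt"
  assumes "finite A" "finite B" "supp f \<subseteq> A" "supp g \<subseteq> B"
  shows "emult p f g m = (if valid_mono p m then
      (\<Sum>x \<in> {x. fst x \<in> A \<and> snd x \<in> B \<and> mono_mult (fst x) (snd x) = m}. f (fst x) * g (snd x))
    else 0)"
proof (cases "valid_mono p m")
  case True
  have fin: "finite {x. fst x \<in> A \<and> snd x \<in> B \<and> mono_mult (fst x) (snd x) = m}"
    by (rule finite_subset[of _ "A \<times> B"]) (use assms in auto)
  have "(\<Sum>x \<in> {x. fst x \<in> supp f \<and> snd x \<in> supp g \<and> mono_mult (fst x) (snd x) = m}.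
           f (fst x) * g (snd x))
      = (\<Sum>x \<in> {x. fst x \<in> A \<and> snd x \<in> B \<and> mono_mult (fst x) (snd x) = m}. f (fst x) * g (snd x))"
    by (rule sum.mono_neutral_left[OF fin]) (use assms in \<open>auto simp: supp_def\<close>)
  moreover have "{(m1, m2). m1 \<in> supp f \<and> m2 \<in> supp g \<and> mono_mult m1 m2 = m}
     = {x. fst x \<in> supp f \<and> snd x \<in> supp g \<and> mono_mult (fst x) (snd x) = m}" by auto
  ultimately show ?thesis
    using True by (simp add: emult_def split_def)
qed (simp add: emult_def)

lemma emult_add_left:
  fixes f g h :: "'k::comm_ring_1 elt"
  assumes "f \<in> FA p" "g \<in> FA p" "h \<in> FA p"
  shows "emult p (f + g) h = emult p f h + emult p g h"
proof
  fix m
  have fin: "finite (supp f \<union> supp g)" "finite (supp h)" using assms FA_finite_supp by auto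
  note expand = emult_eq_sum_over[OF fin _ order_refl, of _ p m]
  have "supp f \<subseteq> supp f \<union> supp g" "supp g \<subseteq> supp f \<union> supp g" "supp (f + g) \<subseteq> supp f \<union> supp g"
    using supp_add[of f g] by auto
  then show "emult p (f + g) h m = (emult p f h + emult p g h) m"
    unfolding plus_fun_apply by (simp add: expand distrib_right sum.distrib)
qed

lemma emult_add_right:
  fixes f g h :: "'k::comm_ring_1 elt"
  assumes "f \<in> FA p" "g \<in> FA p" "h \<in> FA p"
  shows "emult p h (f + g) = emult p h f + emult p h g"
proof
  fix m
  have fin: "finite (supp h)" "finite (supp f \<union> supp g)" using assms FA_finite_supp by auto
  note expand = emult_eq_sum_over[OF fin order_refl, of _ p m]
  have "supp f \<subseteq> supp f \<union> supp g" "supp g \<subseteq> supp f \<union> supp g" "supp (f + g) \<subseteq> supp f \<union> supp g"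
    using supp_add[of f g] by auto
  then show "emult p h (f + g) m = (emult p h f + emult p h g) m"
    unfolding plus_fun_apply by (simp add: expand distrib_left sum.distrib)
qed

lemma emult_escale_left:
  fixes f h :: "'k::comm_ring_1 elt"
  assumes "f \<in> FA p" "h \<in> FA p"
  shows "emult p (escale c f) h = escale c (emult p f h)"
proof
  fix m
  have fin: "finite (supp f)" "finite (supp h)" using assms FA_finite_supp by auto
  show "emult p (escale c f) h m = escale c (emult p f h) m"
    unfolding emult_eq_sum_over[OF fin supp_escale order_refl]
      escale_def[of c "emult p f h"] emult_eq_sum_over[OF fin order_refl order_refl]
    by (simp add: escale_def sum_distrib_left mult.assoc)
qed

lemma emult_escale_right:
  fixes f h :: "'k::comm_ring_1 elt"
  assumes "f \<in> FA p" "h \<in> FA p"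
  shows "emult p h (escale c f) = escale c (emult p h f)"
proof
  fix m
  have fin: "finite (supp h)" "finite (supp f)" using assms FA_finite_supp by auto
  show "emult p h (escale c f) m = escale c (emult p h f) m"
    unfolding emult_eq_sum_over[OF fin order_refl supp_escale]
      escale_def[of c "emult p h f"] emult_eq_sum_over[OF fin order_refl order_refl]
    by (simp add: escale_def sum_distrib_left mult.left_commute)
qed

lemma emult_zero_left [simp]: "emult p 0 (g::'k::comm_ring_1 elt) = 0"
  by (rule ext) (simp add: emult_def supp_def)

lemma emult_zero_right [simp]: "emult p (g::'k::comm_ring_1 elt) 0 = 0"
  by (rule ext) (simp add: emult_def supp_def)

lemma emult_uminus_left:
  "f \<in> FA p \<Longrightarrow> h \<in> FA p \<Longrightarrow> emult p (- f) h = - emult p f (h::'k::comm_ring_1 elt)"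
  using emult_escale_left[of f p h "-1"] by (simp add: escale_minus_one)

lemma emult_uminus_right:
  "f \<in> FA p \<Longrightarrow> h \<in> FA p \<Longrightarrow> emult p h (- f) = - emult p h (f::'k::comm_ring_1 elt)"
  using emult_escale_right[of f p h "-1"] by (simp add: escale_minus_one)

lemma emult_diff_left:
  "f \<in> FA p \<Longrightarrow> g \<in> FA p \<Longrightarrow> h \<in> FA p \<Longrightarrow>
    emult p (f - g) h = emult p f h - emult p g (h::'k::comm_ring_1 elt)"
  using emult_add_left[of f p "-g" h] by (simp add: emult_uminus_left)

lemma emult_diff_right:
  "f \<in> FA p \<Longrightarrow> g \<in> FA p \<Longrightarrow> h \<in> FA p \<Longrightarrow>
    emult p h (f - g) = emult p h f - emult p h (g::'k::comm_ring_1 elt)"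
  using emult_add_right[of f p "-g" h] by (simp add: emult_uminus_right)

lemma FA_emult [simp]:
  fixes f g :: "'k::comm_ring_1 elt"
  assumes "f \<in> FA p" "g \<in> FA p"
  shows "emult p f g \<in> FA p"
proof (rule FAI)
  have "supp (emult p f g) \<subseteq> case_prod mono_mult ` (supp f \<times> supp g)"
  proof
    fix m assume "m \<in> supp (emult p f g)"
    then have "emult p f g m \<noteq> 0" by (simp add: supp_def)
    then have "(\<Sum>(m1, m2) \<in> {(m1, m2). m1 \<in> supp f \<and> m2 \<in> supp g \<and> mono_mult m1 m2 = m}.
          f m1 * g m2) \<noteq> 0"
      unfolding emult_def by (metis (no_types, lifting))
    then obtain m1 m2 where "m1 \<in> supp f" "m2 \<in> supp g" "mono_mult m1 m2 = m"
      using sum.not_neutral_contains_not_neutral by blast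
    then show "m \<in> case_prod mono_mult ` (supp f \<times> supp g)" by force
  qed
  then show "finite (supp (emult p f g))"
    using assms by (meson FA_finite_supp finite_SigmaI finite_imageI finite_subset)
  show "\<And>m. emult p f g m \<noteq> 0 \<Longrightarrow> valid_mono p m"
    unfolding emult_def by metis
qed

lemma FA_ecomm [simp]: "f \<in> FA p \<Longrightarrow> g \<in> FA p \<Longrightarrow> ecomm p f (g::'k::comm_ring_1 elt) \<in> FA p"
  by (simp add: ecomm_def)

lemma mono_exhaust:
  obtains a b c w where "m = ((a, b, c), w)"
  by (metis prod.exhaust)

lemma emult_monom:
  "emult p (monom p m1) (monom p m2 :: 'k::comm_ring_1 elt) = monom p (mono_mult m1 m2)"
proof
  fix m
  have fin: "finite {m1}" "finite {m2}" by auto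
  have supp: "supp (monom p m1 :: 'k elt) \<subseteq> {m1}" "supp (monom p m2 :: 'k elt) \<subseteq> {m2}"
    by (auto simp: supp_def monom_apply split: if_splits)
  have pairs: "{x. fst x \<in> {m1} \<and> snd x \<in> {m2} \<and> mono_mult (fst x) (snd x) = m} =
      (if mono_mult m1 m2 = m then {(m1, m2)} else {})" by auto
  have "valid_mono p (mono_mult m1 m2) \<Longrightarrow> valid_mono p m1 \<and> valid_mono p m2"
    by (cases m1; cases m2) (auto simp: valid_mono_def)
  then show "emult p (monom p m1) (monom p m2 :: 'k elt) m = monom p (mono_mult m1 m2) m"
    unfolding emult_eq_sum_over[OF fin supp, of p m] pairs by (auto simp: monom_apply)
qed

lemma ecomm_zero_left [simp]: "ecomm p 0 (g::'k::comm_ring_1 elt) = 0"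
  by (simp add: ecomm_def)

lemma ecomm_zero_right [simp]: "ecomm p (g::'k::comm_ring_1 elt) 0 = 0"
  by (simp add: ecomm_def)

lemma ecomm_add_left:
  "f \<in> FA p \<Longrightarrow> g \<in> FA p \<Longrightarrow> h \<in> FA p \<Longrightarrow>
    ecomm p (f + g) h = ecomm p f h + ecomm p g (h::'k::comm_ring_1 elt)"
  by (simp add: ecomm_def emult_add_left emult_add_right)

lemma ecomm_add_right:
  "f \<in> FA p \<Longrightarrow> g \<in> FA p \<Longrightarrow> h \<in> FA p \<Longrightarrow>
    ecomm p h (f + g) = ecomm p h f + ecomm p h (g::'k::comm_ring_1 elt)"
  by (simp add: ecomm_def emult_add_left emult_add_right)

lemma ecomm_escale_left:
  "f \<in> FA p \<Longrightarrow> h \<in> FA p \<Longrightarrow> ecomm p (escale c f) h = escale c (ecomm p f (h::'k::comm_ring_1 elt))"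
  by (simp add: ecomm_def emult_escale_left emult_escale_right escale_diff)

lemma ecomm_escale_right:
  "f \<in> FA p \<Longrightarrow> h \<in> FA p \<Longrightarrow> ecomm p h (escale c f) = escale c (ecomm p h (f::'k::comm_ring_1 elt))"
  by (simp add: ecomm_def emult_escale_left emult_escale_right escale_diff)

section \<open>Homogeneous components\<close>

definition hcomp :: "nat \<Rightarrow> 'k::comm_ring_1 elt \<Rightarrow> 'k elt" where
  "hcomp n f = (\<lambda>m. if length (snd m) = n then f m else 0)"

lemma hcomp_add [simp]: "hcomp n (f + g) = hcomp n f + hcomp n (g::'k::comm_ring_1 elt)"
  by (rule ext) (simp add: hcomp_def)

lemma hcomp_diff [simp]: "hcomp n (f - g) = hcomp n f - hcomp n (g::'k::comm_ring_1 elt)"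
  by (rule ext) (simp add: hcomp_def)

lemma hcomp_zero [simp]: "hcomp n (0::'k::comm_ring_1 elt) = 0"
  by (rule ext) (simp add: hcomp_def)

lemma hcomp_escale [simp]: "hcomp n (escale c f) = escale c (hcomp n (f::'k::comm_ring_1 elt))"
  by (rule ext) (simp add: hcomp_def escale_def)

lemma hcomp_monom [simp]:
  "hcomp n (monom p (e, w) :: 'k::comm_ring_1 elt) = (if length w = n then monom p (e, w) else 0)"
  by (rule ext) (auto simp: hcomp_def monom_apply)

lemma sum_atMost_if_eq_and_diff_eq:
  "(\<Sum>i\<le>n. if (a::nat) = i \<and> b = n - i then c else (0::'a::comm_monoid_add)) = (if a + b = n then c else 0)"
proof (cases "a + b = n")
  case True
  then have "\<And>i. (a = i \<and> b = n - i) = (i = a)" by force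
  then show ?thesis using True by (simp add: sum.delta')
next
  case False
  then have "\<And>i. i \<le> n \<Longrightarrow> \<not> (a = i \<and> b = n - i)" by auto
  then have "(\<Sum>i\<le>n. if a = i \<and> b = n - i then c else (0::'a)) = (\<Sum>i\<le>n. 0)"
    by (intro sum.cong) auto
  then show ?thesis using False by simp
qed

lemma hcomp_emult:
  fixes f g :: "'k::comm_ring_1 elt"
  assumes "f \<in> FA p" "g \<in> FA p"
  shows "hcomp n (emult p f g) = (\<Sum>i\<le>n. emult p (hcomp i f) (hcomp (n - i) g))"
proof
  fix m
  have fin: "finite (supp f)" "finite (supp g)" using assms FA_finite_supp by auto
  have supp_hcomp: "\<And>i h. supp (hcomp i h) \<subseteq> supp (h::'k elt)" by (auto simp: supp_def hcomp_def)
  let ?P = "{x. fst x \<in> supp f \<and> snd x \<in> supp g \<and> mono_mult (fst x) (snd x) = m}"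
  have split_length: "(\<Sum>i\<le>n. hcomp i f (fst x) * hcomp (n - i) g (snd x)) =
      (if length (snd m) = n then f (fst x) * g (snd x) else 0)" if "x \<in> ?P" for x
  proof -
    have "length (snd m) = length (snd (fst x)) + length (snd (snd x))"
      using that by (cases "fst x"; cases "snd x") auto
    moreover have "(\<Sum>i\<le>n. hcomp i f (fst x) * hcomp (n - i) g (snd x)) =
        (\<Sum>i\<le>n. if length (snd (fst x)) = i \<and> length (snd (snd x)) = n - i
                 then f (fst x) * g (snd x) else 0)"
      by (rule sum.cong) (auto simp: hcomp_def)
    ultimately show ?thesis by (simp only: sum_atMost_if_eq_and_diff_eq)
  qed
  have "(\<Sum>i\<le>n. emult p (hcomp i f) (hcomp (n - i) g)) m
      = (if valid_mono p m then (\<Sum>x\<in>?P. \<Sum>i\<le>n. hcomp i f (fst x) * hcomp (n - i) g (snd x)) else 0)"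
    unfolding sum_fun_apply emult_eq_sum_over[OF fin supp_hcomp supp_hcomp]
    by (simp add: sum.swap[of _ "{..n}"])
  also have "\<dots> = (if valid_mono p m then
      (\<Sum>x\<in>?P. if length (snd m) = n then f (fst x) * g (snd x) else 0) else 0)"
    using split_length by (intro if_cong refl sum.cong) auto
  also have "\<dots> = hcomp n (emult p f g) m"
    by (simp add: hcomp_def emult_eq_sum_over[OF fin order_refl order_refl])
  finally show "hcomp n (emult p f g) m = (\<Sum>i\<le>n. emult p (hcomp i f) (hcomp (n - i) g)) m" ..
qed

text \<open>The second equation is stated for \<open>Suc 0\<close> rather than \<open>1\<close> because the simplifier
  rewrites \<open>1 :: nat\<close> to \<open>Suc 0\<close>, so only this form can be used as a rewrite rule.\<close>

lemma hcomp_ecomm_low: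
  fixes f g :: "'k::comm_ring_1 elt"
  assumes FA: "f \<in> FA p" "g \<in> FA p" and no_const: "hcomp 0 f = 0" "hcomp 0 g = 0"
  shows "hcomp 0 (ecomm p f g) = 0" "hcomp (Suc 0) (ecomm p f g) = 0"
    "hcomp 2 (ecomm p f g) = ecomm p (hcomp 1 f) (hcomp 1 g)"
    "hcomp 3 (ecomm p f g) = ecomm p (hcomp 1 f) (hcomp 2 g) + ecomm p (hcomp 2 f) (hcomp 1 g)"
  using no_const
  by (simp_all add: ecomm_def hcomp_emult[OF FA] hcomp_emult[OF FA(2,1)] eval_nat_numeral
      atMost_Suc algebra_simps)

text \<open>The induction method puts function-valued terms such as \<open>0\<close>, \<open>x + y\<close> and \<open>x - y\<close> into
  eta-long form; these rules undo that.\<close>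

lemma eta_long_zero [simp]: "(\<lambda>a. 0) = (0::'k::zero elt)"
  by (simp add: fun_eq_iff)

lemma eta_long_plus [simp]: "(\<lambda>a. f a + g a) = f + (g::'k::plus elt)"
  by (simp add: fun_eq_iff)

lemma eta_long_minus [simp]: "(\<lambda>a. f a - g a) = f - (g::'k::minus elt)"
  by (simp add: fun_eq_iff)

inductive_set kspan :: "'k::comm_ring_1 elt set \<Rightarrow> 'k elt set" for S where
  zero: "0 \<in> kspan S"
| gen: "s \<in> S \<Longrightarrow> s \<in> kspan S"
| add: "x \<in> kspan S \<Longrightarrow> y \<in> kspan S \<Longrightarrow> x + y \<in> kspan S"
| scale: "x \<in> kspan S \<Longrightarrow> escale c x \<in> kspan S"

lemma kspan_subset_FA:
  assumes "S \<subseteq> FA p"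
  shows "kspan S \<subseteq> FA p"
proof
  fix x assume "x \<in> kspan S"
  then show "x \<in> FA p" by induction (use assms in auto)
qed

lemma kspan_sum: "finite A \<Longrightarrow> (\<And>a. a \<in> A \<Longrightarrow> F a \<in> kspan S) \<Longrightarrow> sum F A \<in> kspan S"
  by (induction A rule: finite_induct) (auto intro: kspan.intros)

lemma kspan_bilinear:
  fixes B :: "'k::comm_ring_1 elt \<Rightarrow> 'k elt \<Rightarrow> 'k elt"
  assumes S: "S \<subseteq> FA p" and T: "T \<subseteq> FA p"
    and B_zero: "\<And>z. B 0 z = 0" "\<And>z. B z 0 = 0"
    and B_add: "\<And>x y z. x \<in> FA p \<Longrightarrow> y \<in> FA p \<Longrightarrow> z \<in> FA p \<Longrightarrow> B (x + y) z = B x z + B y z"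
      "\<And>x y z. x \<in> FA p \<Longrightarrow> y \<in> FA p \<Longrightarrow> z \<in> FA p \<Longrightarrow> B z (x + y) = B z x + B z y"
    and B_scale: "\<And>c x z. x \<in> FA p \<Longrightarrow> z \<in> FA p \<Longrightarrow> B (escale c x) z = escale c (B x z)"
      "\<And>c x z. x \<in> FA p \<Longrightarrow> z \<in> FA p \<Longrightarrow> B z (escale c x) = escale c (B z x)"
    and generators: "\<And>s t. s \<in> S \<Longrightarrow> t \<in> T \<Longrightarrow> B s t \<in> kspan U"
    and x: "x \<in> kspan S" and y: "y \<in> kspan T"
  shows "B x y \<in> kspan U"
proof -
  have span_S: "kspan S \<subseteq> FA p" and span_T: "kspan T \<subseteq> FA p"
    using S T by (simp_all add: kspan_subset_FA)
  have gen_left: "B s y \<in> kspan U" if s: "s \<in> S" for s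
    using y
  proof induction
    case zero
    then show ?case by (simp add: B_zero kspan.zero)
  next
    case (gen t)
    then show ?case using generators[OF s] by blast
  next
    case (add y1 y2)
    then have "y1 \<in> FA p" "y2 \<in> FA p" "s \<in> FA p" using span_T s S by auto
    then show ?case using add.IH by (simp add: B_add kspan.add)
  next
    case (scale y1 c)
    then have "y1 \<in> FA p" "s \<in> FA p" using span_T s S by auto
    then show ?case using scale.IH by (simp add: B_scale kspan.scale)
  qed
  from x show ?thesis
  proof induction
    case zero
    then show ?case by (simp add: B_zero kspan.zero)
  next
    case (gen s)
    then show ?case by (rule gen_left)
  next
    case (add x1 x2)
    then have "x1 \<in> FA p" "x2 \<in> FA p" "y \<in> FA p" using span_S span_T y by auto
    then show ?case using add.IH by (simp add: B_add kspan.add)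
  next
    case (scale x1 c)
    then have "x1 \<in> FA p" "y \<in> FA p" using span_S span_T y by auto
    then show ?case using scale.IH by (simp add: B_scale kspan.scale)
  qed
qed

lemma FA_induct_monom [consumes 1, case_names zero monom add scale]:
  fixes f :: "'k::comm_ring_1 elt"
  assumes "f \<in> FA p" "P 0" "\<And>m. P (monom p m)"
    "\<And>x y. x \<in> FA p \<Longrightarrow> y \<in> FA p \<Longrightarrow> P x \<Longrightarrow> P y \<Longrightarrow> P (x + y)"
    "\<And>c x. x \<in> FA p \<Longrightarrow> P x \<Longrightarrow> P (escale c x)"
  shows "P f"
proof -
  have span: "kspan (range (monom p)) \<subseteq> (FA p :: 'k elt set)"
    by (rule kspan_subset_FA) auto
  have "(\<Sum>m\<in>supp f. escale (f m) (monom p m)) \<in> kspan (range (monom p))"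
    by (rule kspan_sum) (use FA_finite_supp[OF assms(1)] in \<open>auto intro: kspan.intros\<close>)
  then have "f \<in> kspan (range (monom p))"
    using FA_eq_sum_monom[OF assms(1)] by simp
  then show ?thesis
    by induction (use span in \<open>auto intro: assms(2-)\<close>)
qed

definition lin_form :: "(mono \<times> 'k) list \<Rightarrow> 'k::comm_ring_1 elt \<Rightarrow> 'k" where
  "lin_form L f = (\<Sum>(m, c)\<leftarrow>L. c * f m)"

lemma lin_form_Cons [simp]: "lin_form ((m, c) # L) f = c * f m + lin_form L f"
  by (simp add: lin_form_def)

lemma lin_form_Nil [simp]: "lin_form [] f = 0"
  by (simp add: lin_form_def)

lemma lin_form_kspan_eq_0:
  assumes "x \<in> kspan S" "\<And>s. s \<in> S \<Longrightarrow> lin_form L s = 0"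
  shows "lin_form L x = 0"
  using assms
proof induction
  case zero
  show ?case by (induction L) auto
next
  case (gen s)
  then show ?case by simp
next
  case (add x y)
  then show ?case by (simp add: lin_form_def distrib_left sum_list_addf split_def)
next
  case (scale x c)
  then show ?case
    by (simp add: lin_form_def escale_def sum_list_const_mult algebra_simps split_def)
qed

definition ymon :: "nat \<Rightarrow> nat \<times> nat \<times> nat \<Rightarrow> 'k::comm_ring_1 elt" where
  "ymon p e = monom p (e, [])"

lemma FA_ymon [simp]: "ymon p e \<in> FA p"
  by (simp add: ymon_def)

lemma ymon_in_Kpart: "ymon p e \<in> Kpart p"
  by (auto simp: Kpart_def ymon_def monom_apply)

lemma Kpart_in_kspan_ymon:
  assumes "c \<in> Kpart p"
  shows "c \<in> kspan (range (ymon p))"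
proof -
  have c: "c \<in> FA p" using assms by (simp add: Kpart_def)
  have "escale (c m) (monom p m) \<in> kspan (range (ymon p))" if "m \<in> supp c" for m
  proof -
    obtain e1 e2 e3 w where m: "m = ((e1, e2, e3), w)" by (cases m rule: mono_exhaust)
    then have "w = []" using assms that by (auto simp: Kpart_def supp_def)
    then show ?thesis using m by (auto intro: kspan.intros simp: ymon_def)
  qed
  then have "(\<Sum>m\<in>supp c. escale (c m) (monom p m)) \<in> kspan (range (ymon p))"
    by (intro kspan_sum FA_finite_supp[OF c])
  then show ?thesis using FA_eq_sum_monom[OF c] by simp
qed

lemma emult_ymon_0:
  fixes f :: "'k::comm_ring_1 elt"
  assumes "f \<in> FA p" "1 \<le> p"
  shows "emult p (ymon p (0, 0, 0)) f = f"
  using assms(1)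
proof (induction rule: FA_induct_monom)
  case (monom m)
  show ?case by (cases m rule: mono_exhaust) (simp add: ymon_def emult_monom)
qed (simp_all add: emult_add_right emult_escale_right)

lemma emult_ymon_ymon:
  fixes f :: "'k::comm_ring_1 elt"
  assumes "f \<in> FA p"
  shows "emult p (ymon p (a, b, c)) (emult p (ymon p (a', b', c')) f) =
    emult p (ymon p (a + a', b + b', c + c')) f"
  using assms
proof (induction rule: FA_induct_monom)
  case (monom m)
  show ?case by (cases m rule: mono_exhaust) (simp add: ymon_def emult_monom add.assoc)
qed (simp_all add: emult_add_right emult_escale_right)

lemma ecomm_ymon_ymon:
  fixes f g :: "'k::comm_ring_1 elt"
  assumes "f \<in> FA p" "g \<in> FA p"
  shows "ecomm p (emult p (ymon p (a, b, c)) f) (emult p (ymon p (a', b', c')) g) =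
    emult p (ymon p (a + a', b + b', c + c')) (ecomm p f g)"
  using assms(1)
proof (induction rule: FA_induct_monom)
  case (monom m)
  show ?case
    using assms(2)
  proof (induction rule: FA_induct_monom)
    case (monom m')
    show ?case
      by (cases m rule: mono_exhaust; cases m' rule: mono_exhaust)
        (simp add: ecomm_def ymon_def emult_monom emult_diff_right algebra_simps)
  qed (simp_all add: emult_add_right emult_escale_right ecomm_add_right ecomm_escale_right)
qed (use assms(2) in \<open>simp_all add: emult_add_right emult_escale_right ecomm_add_left
    ecomm_escale_left\<close>)

lemma hcomp_Kpart_emult:
  fixes c h :: "'k::comm_ring_1 elt"
  assumes "c \<in> Kpart p" "h \<in> FA p"
  shows "hcomp n (emult p c h) = emult p c (hcomp n h)"
proof -
  have c: "c \<in> FA p" using assms by (simp add: Kpart_def)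
  have "hcomp i c = (if i = 0 then c else 0)" for i
    using assms(1) by (auto simp: fun_eq_iff hcomp_def Kpart_def)
  then have "emult p (hcomp i c) (hcomp (n - i) h) = (if i = 0 then emult p c (hcomp n h) else 0)" for i
    by simp
  then show ?thesis
    by (simp add: hcomp_emult[OF c assms(2)])
qed

section \<open>Low-degree shape of Lie elements\<close>

definition xvar :: "nat \<Rightarrow> nat \<Rightarrow> 'k::comm_ring_1 elt" where
  "xvar p i = monom p ((0, 0, 0), [i])"

definition relator :: "nat \<Rightarrow> 'k::comm_ring_1 elt" where
  "relator p = monom p ((0, 0, 1), [3]) - monom p ((0, 1, 0), [2]) - monom p ((1, 0, 0), [1])"

lemma FA_xvar [simp]: "xvar p i \<in> FA p"
  by (simp add: xvar_def)

lemma FA_relator [simp]: "relator p \<in> FA p"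
  by (simp add: relator_def)

lemma hcomp_xvar: "hcomp n (xvar p i) = (if n = 1 then xvar p i else (0::'k::comm_ring_1 elt))"
  by (simp add: xvar_def)

lemma hcomp_relator: "hcomp n (relator p) = (if n = 1 then relator p else (0::'k::comm_ring_1 elt))"
  by (simp add: relator_def)

lemma xg_eq_xvar: "1 \<le> p \<Longrightarrow> i \<in> {1, 2, 3} \<Longrightarrow> (xg i :: 'k::comm_ring_1 elt) = xvar p i"
  by (auto simp: xg_def xvar_def monom_def valid_mono_def)

lemma rel_eq_relator: "2 \<le> p \<Longrightarrow> (rel :: 'k::comm_ring_1 elt) = relator p"
  by (simp add: rel_def relator_def monom_def valid_mono_def)

definition kmultiples :: "nat \<Rightarrow> ('i \<Rightarrow> 'k::comm_ring_1 elt) \<Rightarrow> 'i set \<Rightarrow> 'k elt set" where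
  "kmultiples p G I = {emult p (ymon p e) (G i) | e i. i \<in> I}"

lemma kmultiples_subset_FA: "(\<And>i. G i \<in> FA p) \<Longrightarrow> kmultiples p G I \<subseteq> FA p"
  by (auto simp: kmultiples_def)

lemma generator_in_kmultiples:
  assumes "1 \<le> p" "G i \<in> FA p" "i \<in> I"
  shows "G i \<in> kmultiples p G I"
proof -
  have "emult p (ymon p (0, 0, 0)) (G i) \<in> kmultiples p G I"
    using assms(3) unfolding kmultiples_def by blast
  then show ?thesis using emult_ymon_0[OF assms(2,1)] by simp
qed

lemma ymon_emult_kmultiples:
  assumes "\<And>i. G i \<in> FA p" "t \<in> kmultiples p G I"
  shows "emult p (ymon p e) t \<in> kmultiples p G I"
proof -
  obtain a b c i where "i \<in> I" "t = emult p (ymon p (a, b, c)) (G i)"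
    using assms(2) unfolding kmultiples_def by auto
  then show ?thesis
    using assms(1) by (cases e) (auto simp: kmultiples_def emult_ymon_ymon)
qed

lemma Kpart_emult_kspan:
  fixes c t :: "'k::comm_ring_1 elt"
  assumes "c \<in> Kpart p" "t \<in> kspan S" "S \<subseteq> FA p"
    and closed: "\<And>e s. s \<in> S \<Longrightarrow> emult p (ymon p e) s \<in> S"
  shows "emult p c t \<in> kspan S"
  by (rule kspan_bilinear[OF _ assms(3) _ _ emult_add_left emult_add_right emult_escale_left
        emult_escale_right _ Kpart_in_kspan_ymon[OF assms(1)] assms(2)])
    (auto intro: kspan.gen closed)

definition lie_deg1 :: "nat \<Rightarrow> 'k::comm_ring_1 elt set" where
  "lie_deg1 p = kmultiples p (xvar p) {1, 2, 3}"

definition lie_deg2 :: "nat \<Rightarrow> 'k::comm_ring_1 elt set" where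
  "lie_deg2 p = kmultiples p (\<lambda>(i, j). ecomm p (xvar p i) (xvar p j)) ({1, 2, 3} \<times> {1, 2, 3})"

definition rel_deg1 :: "nat \<Rightarrow> 'k::comm_ring_1 elt set" where
  "rel_deg1 p = kmultiples p (\<lambda>_. relator p) {()}"

definition rel_deg2 :: "nat \<Rightarrow> 'k::comm_ring_1 elt set" where
  "rel_deg2 p = kmultiples p (\<lambda>i. ecomm p (relator p) (xvar p i)) {1, 2, 3}"

definition rel_deg3 :: "nat \<Rightarrow> 'k::comm_ring_1 elt set" where
  "rel_deg3 p =
     kmultiples p (\<lambda>(i, j). ecomm p (ecomm p (relator p) (xvar p i)) (xvar p j)) ({1, 2, 3} \<times> {1, 2, 3})
   \<union> kmultiples p (\<lambda>(i, j). ecomm p (relator p) (ecomm p (xvar p i) (xvar p j))) ({1, 2, 3} \<times> {1, 2, 3})"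

lemma deg_sets_subset_FA:
  "lie_deg1 p \<subseteq> FA p" "lie_deg2 p \<subseteq> FA p"
  "rel_deg1 p \<subseteq> FA p" "rel_deg2 p \<subseteq> FA p" "rel_deg3 p \<subseteq> FA p"
  unfolding lie_deg1_def lie_deg2_def rel_deg1_def rel_deg2_def rel_deg3_def
  by (intro kmultiples_subset_FA Un_least; simp add: split_def)+

lemma ymon_emult_deg_sets:
  fixes s :: "'k::comm_ring_1 elt"
  shows "s \<in> lie_deg1 p \<Longrightarrow> emult p (ymon p e) s \<in> lie_deg1 p"
    "s \<in> lie_deg2 p \<Longrightarrow> emult p (ymon p e) s \<in> lie_deg2 p"
    "s \<in> rel_deg1 p \<Longrightarrow> emult p (ymon p e) s \<in> rel_deg1 p"
    "s \<in> rel_deg2 p \<Longrightarrow> emult p (ymon p e) s \<in> rel_deg2 p"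
    "s \<in> rel_deg3 p \<Longrightarrow> emult p (ymon p e) s \<in> rel_deg3 p"
  unfolding lie_deg1_def lie_deg2_def rel_deg1_def rel_deg2_def rel_deg3_def
  by (auto intro: ymon_emult_kmultiples simp: split_def)

lemma ecomm_kmultiples:
  assumes "\<And>i. G i \<in> FA p" "\<And>j. H j \<in> FA p"
    and "\<And>i j. i \<in> I \<Longrightarrow> j \<in> J \<Longrightarrow> ecomm p (G i) (H j) = M (\<phi> i j) \<and> \<phi> i j \<in> L"
    and "s \<in> kmultiples p G I" "t \<in> kmultiples p H J"
  shows "ecomm p s t \<in> kmultiples p M L"
proof -
  obtain e i e' j where ij: "i \<in> I" "j \<in> J"
    and st: "s = emult p (ymon p e) (G i)" "t = emult p (ymon p e') (H j)"
    using assms(4,5) unfolding kmultiples_def by blast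
  obtain a b c a' b' c' where "e = (a, b, c)" "e' = (a', b', c')"
    by (cases e rule: prod_cases3, cases e' rule: prod_cases3)
  then have "ecomm p s t = emult p (ymon p (a + a', b + b', c + c')) (M (\<phi> i j))"
    using st assms(1,2) assms(3)[OF ij] by (simp add: ecomm_ymon_ymon)
  then show ?thesis
    using assms(3)[OF ij] unfolding kmultiples_def by blast
qed

lemma ecomm_deg_sets:
  fixes s t :: "'k::comm_ring_1 elt"
  shows "s \<in> lie_deg1 p \<Longrightarrow> t \<in> lie_deg1 p \<Longrightarrow> ecomm p s t \<in> lie_deg2 p"
    and "s \<in> rel_deg1 p \<Longrightarrow> t \<in> lie_deg1 p \<Longrightarrow> ecomm p s t \<in> rel_deg2 p"
    and "s \<in> rel_deg2 p \<Longrightarrow> t \<in> lie_deg1 p \<Longrightarrow> ecomm p s t \<in> rel_deg3 p"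
    and "s \<in> rel_deg1 p \<Longrightarrow> t \<in> lie_deg2 p \<Longrightarrow> ecomm p s t \<in> rel_deg3 p"
proof -
  show "s \<in> lie_deg1 p \<Longrightarrow> t \<in> lie_deg1 p \<Longrightarrow> ecomm p s t \<in> lie_deg2 p"
    unfolding lie_deg1_def lie_deg2_def
    by (rule ecomm_kmultiples[where \<phi> = Pair]) (auto simp: split_def)
  show "s \<in> rel_deg1 p \<Longrightarrow> t \<in> lie_deg1 p \<Longrightarrow> ecomm p s t \<in> rel_deg2 p"
    unfolding rel_deg1_def lie_deg1_def rel_deg2_def
    by (rule ecomm_kmultiples[where \<phi> = "\<lambda>_ j. j"]) auto
  show "s \<in> rel_deg2 p \<Longrightarrow> t \<in> lie_deg1 p \<Longrightarrow> ecomm p s t \<in> rel_deg3 p"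
    unfolding rel_deg2_def lie_deg1_def rel_deg3_def
    by (rule UnI1, rule ecomm_kmultiples[where \<phi> = Pair]) (auto simp: split_def)
  show "s \<in> rel_deg1 p \<Longrightarrow> t \<in> lie_deg2 p \<Longrightarrow> ecomm p s t \<in> rel_deg3 p"
    unfolding rel_deg1_def lie_deg2_def rel_deg3_def
    by (rule UnI2, rule ecomm_kmultiples[where \<phi> = "\<lambda>_ ij. ij"]) (auto simp: split_def)
qed

lemma kspan_ecomm:
  fixes S T :: "'k::comm_ring_1 elt set"
  assumes "S \<subseteq> FA p" "T \<subseteq> FA p" "\<And>s t. s \<in> S \<Longrightarrow> t \<in> T \<Longrightarrow> ecomm p s t \<in> U"
    and "x \<in> kspan S" "y \<in> kspan T"
  shows "ecomm p x y \<in> kspan U"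
  by (rule kspan_bilinear[OF assms(1,2) _ _ ecomm_add_left ecomm_add_right ecomm_escale_left
        ecomm_escale_right _ assms(4,5)]) (auto intro: kspan.gen assms(3))

definition free_lie_shape :: "nat \<Rightarrow> 'k::comm_ring_1 elt \<Rightarrow> bool" where
  "free_lie_shape p h \<longleftrightarrow> h \<in> FA p \<and> hcomp 0 h = 0 \<and>
     hcomp 1 h \<in> kspan (lie_deg1 p) \<and> hcomp 2 h \<in> kspan (lie_deg2 p)"

definition lie_ideal_shape :: "nat \<Rightarrow> 'k::comm_ring_1 elt \<Rightarrow> bool" where
  "lie_ideal_shape p g \<longleftrightarrow> g \<in> FA p \<and> hcomp 0 g = 0 \<and>
     hcomp 1 g \<in> kspan (rel_deg1 p) \<and> hcomp 2 g \<in> kspan (rel_deg2 p) \<and> hcomp 3 g \<in> kspan (rel_deg3 p)"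

lemma FreeLie_shape:
  assumes "1 \<le> p" "h \<in> FreeLie p"
  shows "free_lie_shape p (h :: 'k::comm_ring_1 elt)"
  using assms(2)
proof induction
  case (gen i)
  have "(xvar p i :: 'k elt) \<in> lie_deg1 p"
    unfolding lie_deg1_def using assms(1) gen by (intro generator_in_kmultiples[where G = "xvar p"]) simp_all
  then show ?case
    using gen assms(1) by (simp add: free_lie_shape_def xg_eq_xvar hcomp_xvar kspan.gen kspan.zero)
next
  case zero
  then show ?case by (simp add: free_lie_shape_def kspan.zero)
next
  case (add f g)
  then show ?case by (simp add: free_lie_shape_def kspan.add)
next
  case (smult c f)
  then show ?case
    by (simp add: free_lie_shape_def hcomp_Kpart_emult Kpart_emult_kspan deg_sets_subset_FA
        ymon_emult_deg_sets Kpart_def)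
next
  case (bracket f g)
  then have "f \<in> FA p" "g \<in> FA p" "hcomp 0 f = 0" "hcomp 0 g = 0"
    by (simp_all add: free_lie_shape_def)
  with bracket show ?case
    by (simp add: free_lie_shape_def hcomp_ecomm_low kspan.zero
        kspan_ecomm[OF deg_sets_subset_FA(1,1) ecomm_deg_sets(1)])
qed

lemma LieIdeal_shape:
  assumes "2 \<le> p" "g \<in> LieIdeal p"
  shows "lie_ideal_shape p (g :: 'k::comm_ring_1 elt)"
  using assms(2)
proof induction
  case gen
  have "(relator p :: 'k elt) \<in> rel_deg1 p"
    unfolding rel_deg1_def using assms(1)
    by (intro generator_in_kmultiples[where G = "\<lambda>_. relator p" and i = "()"]) simp_all
  then show ?case
    unfolding rel_eq_relator[OF assms(1)]
    by (simp add: lie_ideal_shape_def hcomp_relator kspan.gen kspan.zero)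
next
  case zero
  then show ?case by (simp add: lie_ideal_shape_def kspan.zero)
next
  case (add f g)
  then show ?case by (simp add: lie_ideal_shape_def kspan.add)
next
  case (smult c f)
  then show ?case
    by (simp add: lie_ideal_shape_def hcomp_Kpart_emult Kpart_emult_kspan deg_sets_subset_FA
        ymon_emult_deg_sets Kpart_def)
next
  case (bracket f g)
  have g: "free_lie_shape p g"
    using FreeLie_shape[OF _ bracket.hyps(2)] assms(1) by simp
  then have "f \<in> FA p" "g \<in> FA p" "hcomp 0 f = 0" "hcomp 0 g = 0"
    using bracket.IH by (simp_all add: free_lie_shape_def lie_ideal_shape_def)
  with bracket.IH g show ?case
    by (simp add: lie_ideal_shape_def free_lie_shape_def hcomp_ecomm_low kspan.zero kspan.add
        kspan_ecomm[OF deg_sets_subset_FA(3,1) ecomm_deg_sets(2)]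
        kspan_ecomm[OF deg_sets_subset_FA(4,1) ecomm_deg_sets(3)]
        kspan_ecomm[OF deg_sets_subset_FA(3,2) ecomm_deg_sets(4)])
qed

section \<open>The associative ideal\<close>

lemma AssocIdeal_subset_FA:
  assumes "2 \<le> p"
  shows "AssocIdeal p \<subseteq> (FA p :: 'k::comm_ring_1 elt set)"
proof
  fix f :: "'k elt" assume "f \<in> AssocIdeal p"
  then show "f \<in> FA p" by induction (simp_all add: rel_eq_relator[OF assms])
qed

lemma AssocIdeal_uminus:
  assumes "2 \<le> p" "f \<in> AssocIdeal p"
  shows "- (f::'k::comm_ring_1 elt) \<in> AssocIdeal p"
proof -
  have "f \<in> FA p" using AssocIdeal_subset_FA assms by blast
  then have "emult p (- ymon p (0, 0, 0)) f = - f"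
    using assms(1) by (simp add: emult_uminus_left emult_ymon_0)
  moreover have "emult p (- ymon p (0, 0, 0)) f \<in> AssocIdeal p"
    by (rule AssocIdeal.lmult) (simp_all add: assms(2))
  ultimately show ?thesis by simp
qed

lemma AssocIdeal_emult_cong:
  fixes a b c d :: "'k::comm_ring_1 elt"
  assumes "2 \<le> p" "a \<in> FA p" "b \<in> FA p" "c \<in> FA p" "d \<in> FA p"
    and "a - b \<in> AssocIdeal p" "c - d \<in> AssocIdeal p"
  shows "emult p a c - emult p b d \<in> AssocIdeal p"
proof -
  have "emult p a c - emult p b d = emult p (a - b) c + emult p b (c - d)"
    using assms(2-5) by (simp add: emult_diff_left emult_diff_right)
  then show ?thesis
    using assms by (simp add: AssocIdeal.add AssocIdeal.lmult AssocIdeal.rmult)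
qed

definition rel_lhs :: "nat \<Rightarrow> 'k::comm_ring_1 elt" where
  "rel_lhs p = monom p ((0, 0, 1), [3])"

definition rel_rhs :: "nat \<Rightarrow> 'k::comm_ring_1 elt" where
  "rel_rhs p = monom p ((1, 0, 0), [1]) + monom p ((0, 1, 0), [2])"

lemma FA_rel_sides [simp]: "rel_lhs p \<in> FA p" "rel_rhs p \<in> FA p"
  by (simp_all add: rel_lhs_def rel_rhs_def)

lemma rel_rhs_cong_rel_lhs: "2 \<le> p \<Longrightarrow> rel_rhs p - rel_lhs p \<in> (AssocIdeal p :: 'k::comm_ring_1 elt set)"
  using AssocIdeal_uminus[OF _ AssocIdeal.gen]
  by (simp add: rel_eq_relator rel_lhs_def rel_rhs_def relator_def algebra_simps)

lemma numeral_times_eq_escale: "numeral n * f = escale (numeral n) (f :: 'k::comm_ring_1 elt)"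
  by (rule ext) (simp add: escale_def)

lemmas expand_products = ecomm_def emult_add_left emult_add_right emult_diff_left emult_diff_right
  numeral_times_eq_escale emult_escale_left emult_escale_right escale_apply
  emult_monom xvar_def relator_def ymon_def rel_lhs_def rel_rhs_def

section \<open>Characteristic 2\<close>

definition char2_witness :: "'k::comm_ring_1 elt" where
  "char2_witness = emult 2 (ymon 2 (1, 1, 0)) (ecomm 2 (xg 1) (xg 2))"

lemma char2_witness_in_FreeLie: "char2_witness \<in> FreeLie 2"
  unfolding char2_witness_def
  by (intro FreeLie.smult ymon_in_Kpart FreeLie.bracket FreeLie.gen) simp_all

lemma char2_witness_eq: "(char2_witness :: 'k::comm_ring_1 elt) = monom 2 ((1, 1, 0), [1, 2]) - monom 2 ((1, 1, 0), [2, 1])"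
  by (simp add: char2_witness_def xg_eq_xvar[of 2] expand_products)

lemma char2_witness_eq_square:
  assumes "(2::'k::comm_ring_1) = 0"
  shows "(char2_witness :: 'k elt) = emult 2 (rel_rhs 2) (rel_rhs 2)"
proof
  fix m :: mono
  show "(char2_witness :: 'k elt) m = emult 2 (rel_rhs 2) (rel_rhs 2) m"
    using assms by (simp add: char2_witness_eq expand_products monom_apply valid_mono_def
        eq_commute[of "0::'k" 2] del: One_nat_def)
qed

lemma char2_witness_in_AssocIdeal:
  assumes "(2::'k::comm_ring_1) = 0"
  shows "(char2_witness :: 'k elt) \<in> AssocIdeal 2"
proof -
  have "emult 2 (rel_rhs 2) (rel_rhs 2) - emult 2 (rel_lhs 2) (rel_lhs 2) \<in> (AssocIdeal 2 :: 'k elt set)"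
    by (intro AssocIdeal_emult_cong rel_rhs_cong_rel_lhs) simp_all
  moreover have "emult 2 (rel_lhs 2) (rel_lhs 2) = (0 :: 'k elt)"
    by (simp add: rel_lhs_def emult_monom monom_invalid valid_mono_def)
  ultimately show ?thesis
    using char2_witness_eq_square[OF assms] by simp
qed

definition char2_form :: "(mono \<times> 'k::comm_ring_1) list" where
  "char2_form = [(((1, 1, 0), [1, 2]), 1), (((1, 0, 1), [1, 3]), 1), (((0, 1, 1), [2, 3]), 1)]"

lemma char2_form_rel_deg2:
  assumes "(2::'k::comm_ring_1) = 0" "s \<in> rel_deg2 2"
  shows "lin_form char2_form (s :: 'k elt) = 0"
proof -
  have "\<forall>i\<in>{1, 2, 3}. lin_form char2_form
      (emult 2 (ymon 2 (a, b, c)) (ecomm 2 (relator 2) (xvar 2 i)) :: 'k elt) = 0" for a b c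
    by (simp add: assms(1) expand_products char2_form_def monom_apply valid_mono_def
        eq_commute[of "0::'k" 2])
  then show ?thesis
    using assms(2) unfolding rel_deg2_def kmultiples_def by (auto split: prod.splits)
qed

lemma char2_witness_notin_LieIdeal:
  assumes "(2::'k::comm_ring_1) = 0"
  shows "(char2_witness :: 'k elt) \<notin> LieIdeal 2"
proof
  assume "char2_witness \<in> (LieIdeal 2 :: 'k elt set)"
  then have "lie_ideal_shape 2 (char2_witness :: 'k elt)"
    by (intro LieIdeal_shape) simp_all
  then have "hcomp 2 (char2_witness :: 'k elt) \<in> kspan (rel_deg2 2)"
    by (simp add: lie_ideal_shape_def)
  then have "lin_form char2_form (hcomp 2 (char2_witness :: 'k elt)) = 0"
    by (rule lin_form_kspan_eq_0) (rule char2_form_rel_deg2[OF assms])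
  moreover have "lin_form char2_form (hcomp 2 (char2_witness :: 'k elt)) = 1"
    by (simp add: char2_witness_eq char2_form_def monom_apply valid_mono_def)
  ultimately show False by simp
qed

section \<open>Characteristic 3\<close>

definition char3_witness :: "'k::comm_ring_1 elt" where
  "char3_witness =
     emult 3 (ymon 3 (2, 1, 0)) (ecomm 3 (xg 1) (ecomm 3 (xg 1) (xg 2))) +
     emult 3 (ymon 3 (1, 2, 0)) (ecomm 3 (xg 2) (ecomm 3 (xg 2) (xg 1)))"

lemma char3_witness_in_FreeLie: "char3_witness \<in> FreeLie 3"
  unfolding char3_witness_def
  by (intro FreeLie.add FreeLie.smult ymon_in_Kpart FreeLie.bracket FreeLie.gen) simp_all

lemma char3_witness_eq_cube:
  assumes "(3::'k::comm_ring_1) = 0"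
  shows "(char3_witness :: 'k elt) = emult 3 (rel_rhs 3) (emult 3 (rel_rhs 3) (rel_rhs 3))"
proof
  fix m :: mono
  show "(char3_witness :: 'k elt) m = emult 3 (rel_rhs 3) (emult 3 (rel_rhs 3) (rel_rhs 3)) m"
    using assms by (simp add: char3_witness_def xg_eq_xvar[of 3] expand_products monom_apply
        valid_mono_def eq_commute[of "0::'k" 3])
qed

lemma char3_witness_in_AssocIdeal:
  assumes "(3::'k::comm_ring_1) = 0"
  shows "(char3_witness :: 'k elt) \<in> AssocIdeal 3"
proof -
  have "emult 3 (rel_rhs 3) (rel_rhs 3) - emult 3 (rel_lhs 3) (rel_lhs 3) \<in> (AssocIdeal 3 :: 'k elt set)"
    by (intro AssocIdeal_emult_cong rel_rhs_cong_rel_lhs) simp_all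
  then have "emult 3 (rel_rhs 3) (emult 3 (rel_rhs 3) (rel_rhs 3))
      - emult 3 (rel_lhs 3) (emult 3 (rel_lhs 3) (rel_lhs 3)) \<in> (AssocIdeal 3 :: 'k elt set)"
    by (intro AssocIdeal_emult_cong rel_rhs_cong_rel_lhs) simp_all
  moreover have "emult 3 (rel_lhs 3) (emult 3 (rel_lhs 3) (rel_lhs 3)) = (0 :: 'k elt)"
    by (simp add: rel_lhs_def emult_monom monom_invalid valid_mono_def)
  ultimately show ?thesis
    using char3_witness_eq_cube[OF assms] by simp
qed

definition char3_form :: "(mono \<times> 'k::comm_ring_1) list" where
  "char3_form = [(((2, 1, 0), [1, 1, 2]), 1), (((2, 0, 1), [1, 1, 3]), 1), (((1, 2, 0), [1, 2, 2]), 1),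
     (((1, 1, 1), [1, 3, 2]), 1), (((0, 2, 1), [2, 2, 3]), 1)]"

lemma char3_form_rel_deg3_generators:
  assumes "(3::'k::comm_ring_1) = 0"
  shows "\<forall>i\<in>{1, 2, 3}. \<forall>j\<in>{1, 2, 3}. lin_form char3_form
      (emult 3 (ymon 3 (a, b, c)) (ecomm 3 (ecomm 3 (relator 3) (xvar 3 i)) (xvar 3 j)) :: 'k elt) = 0"
    and "\<forall>i\<in>{1, 2, 3}. \<forall>j\<in>{1, 2, 3}. lin_form char3_form
      (emult 3 (ymon 3 (a, b, c)) (ecomm 3 (relator 3) (ecomm 3 (xvar 3 i) (xvar 3 j))) :: 'k elt) = 0"
  by (simp_all add: assms expand_products char3_form_def monom_apply valid_mono_def
      eq_commute[of "0::'k" 3])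

lemma char3_form_rel_deg3:
  assumes "(3::'k::comm_ring_1) = 0" "s \<in> rel_deg3 3"
  shows "lin_form char3_form (s :: 'k elt) = 0"
  using assms(2) char3_form_rel_deg3_generators[OF assms(1)]
  unfolding rel_deg3_def kmultiples_def by (auto split: prod.splits)

lemma char3_witness_notin_LieIdeal:
  assumes "(3::'k::comm_ring_1) = 0" "(2::'k) \<noteq> 0"
  shows "(char3_witness :: 'k elt) \<notin> LieIdeal 3"
proof
  assume "char3_witness \<in> (LieIdeal 3 :: 'k elt set)"
  then have "lie_ideal_shape 3 (char3_witness :: 'k elt)"
    by (intro LieIdeal_shape) simp_all
  then have "hcomp 3 (char3_witness :: 'k elt) \<in> kspan (rel_deg3 3)"
    by (simp add: lie_ideal_shape_def)
  then have "lin_form char3_form (hcomp 3 (char3_witness :: 'k elt)) = 0"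
    by (rule lin_form_kspan_eq_0) (rule char3_form_rel_deg3[OF assms(1)])
  moreover have "lin_form char3_form (hcomp 3 (char3_witness :: 'k elt)) = 2"
    by (simp add: char3_witness_def xg_eq_xvar[of 3] expand_products char3_form_def monom_apply
        valid_mono_def)
  ultimately show False using assms(2) by simp
qed

theorem mainTheorem12:
  assumes "p \<in> {2, 3}"
    and "CHAR('k::field) = p"
  shows "\<not> canonical_map_injective p TYPE('k)"
proof -
  have char: "(of_nat p :: 'k) = 0"
    using assms(2) by (metis of_nat_CHAR)
  from assms(1) consider "p = 2" | "p = 3" by blast
  then obtain W :: "'k elt" where "W \<in> FreeLie p" "W \<in> AssocIdeal p" "W \<notin> LieIdeal p"
  proof cases
    case 1
    then have "(2::'k) = 0" using char by simp
    with 1 show ?thesis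
      by (intro that[of char2_witness])
        (simp_all add: char2_witness_in_FreeLie char2_witness_in_AssocIdeal char2_witness_notin_LieIdeal)
  next
    case 2
    then have three: "(3::'k) = 0" using char by simp
    have "(1::'k) = 3 - 2" by simp
    with three have "(2::'k) \<noteq> 0" by (metis diff_zero zero_neq_one)
    with 2 three show ?thesis
      by (intro that[of char3_witness])
        (simp_all add: char3_witness_in_FreeLie char3_witness_in_AssocIdeal char3_witness_notin_LieIdeal)
  qed
  then show ?thesis
    unfolding canonical_map_injective_def by blast
qed

end
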